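(* Let $\epsilon>0$ and let $\Delta\ge 1$ be an integer. There exists a deterministic distributed algorithm (in the synchronous port-numbering model described in the context) which, on every edge-weighted bicoloured graph of maximum degree at most $\Delta$ with positive edge weights, terminates after $T\le 4+2\Delta/\epsilon$ synchronous communication steps and outputs a matching $M$ with $w(M^* )\le (2+\epsilon)\,w(M)$, where $M^*$ is a maximum-weight matching of the graph.
   Context: A bicoloured graph is a simple undirected bipartite graph $\mathcal{G}=(R\cup B,E)$ with red nodes $R$ and blue nodes $B$ (every edge joins a red and a blue node), without isolated nodes; $\Delta$ is its maximum degree. Each edge $e$ has a positive weight $w(e)$, and for a set of edges $F$, $w(F)=\sum_{e\in F}w(e)$. A matching is a set of edges no two sharing a node; a maximum-weight matching is one of maximum total weight. The preferences of each node are determined by the weights: a node prefers heavier incident edges (the heaviest edge is most preferred). Distributed model: $\mathcal{G}$ is the communication graph. Initially each node $v$ knows only its colour, its degree $d(v)$, and $T$; $v$ has $d(v)$ ports to its neighbours, numbered according to $v$'s preference order (i.e., by decreasing weight of the incident edges). There are no node identifiers. Computation is synchronous: in each step every node receives messages from neighbours, computes deterministically, and sends a message to each neighbour. After $T$ steps each node outputs its partner (if any), consistently, defining a matching. *)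

theory Defs
  imports Complex_Main
begin

text \<open>Nodes are natural numbers (they are anonymous to the algorithm); an undirected
edge is a two-element set of nodes. Colour: True = red, False = blue.\<close>

definition nbrs :: "nat set set \<Rightarrow> nat \<Rightarrow> nat set" where
  "nbrs E v = {u. {u, v} \<in> E}"

definition deg :: "nat set set \<Rightarrow> nat \<Rightarrow> nat" where
  "deg E v = card (nbrs E v)"

definition bicoloured_graph :: "nat set \<Rightarrow> nat set \<Rightarrow> nat set set \<Rightarrow> bool" where
  "bicoloured_graph V R E \<longleftrightarrow> finite V \<and> R \<subseteq> V \<and>
     E \<subseteq> {{r, b} | r b. r \<in> R \<and> b \<in> V - R} \<and> (\<forall>v\<in>V. nbrs E v \<noteq> {})"

definition is_matching :: "nat set set \<Rightarrow> nat set set \<Rightarrow> bool" where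
  "is_matching E M \<longleftrightarrow> M \<subseteq> E \<and> (\<forall>e\<in>M. \<forall>e'\<in>M. e \<noteq> e' \<longrightarrow> e \<inter> e' = {})"

definition max_weight_matching :: "nat set set \<Rightarrow> (nat set \<Rightarrow> real) \<Rightarrow> nat set set \<Rightarrow> bool" where
  "max_weight_matching E w M \<longleftrightarrow> is_matching E M \<and>
     (\<forall>M'. is_matching E M' \<longrightarrow> sum w M' \<le> sum w M)"

definition valid_ports :: "nat set \<Rightarrow> nat set set \<Rightarrow> (nat set \<Rightarrow> real) \<Rightarrow> (nat \<Rightarrow> nat \<Rightarrow> nat) \<Rightarrow> bool" where
  "valid_ports V E w port \<longleftrightarrow> (\<forall>v\<in>V. bij_betw (port v) {..<deg E v} (nbrs E v) \<and>
     (\<forall>i j. i < j \<longrightarrow> j < deg E v \<longrightarrow> w {v, port v j} \<le> w {v, port v i}))"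

definition back_port :: "nat set set \<Rightarrow> (nat \<Rightarrow> nat \<Rightarrow> nat) \<Rightarrow> nat \<Rightarrow> nat \<Rightarrow> nat" where
  "back_port E port u v = (THE j. j < deg E u \<and> port u j = v)"

text \<open>A deterministic anonymous distributed algorithm: initial state from colour and degree
(T is a constant of the algorithm), message sent on each port, state transition on the list
of messages received (indexed by port), and output (port of the partner, if any).\<close>
record ('s, 'm) dist_alg =
  a_init :: "bool \<Rightarrow> nat \<Rightarrow> 's"
  a_send :: "'s \<Rightarrow> nat \<Rightarrow> 'm"
  a_recv :: "'s \<Rightarrow> 'm list \<Rightarrow> 's"
  a_out  :: "'s \<Rightarrow> nat option"

fun run :: "('s, 'm) dist_alg \<Rightarrow> nat set \<Rightarrow> nat set set \<Rightarrow> (nat \<Rightarrow> nat \<Rightarrow> nat) \<Rightarrow> nat \<Rightarrow> nat \<Rightarrow> 's" where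
  "run A R E port 0 v = a_init A (v \<in> R) (deg E v)"
| "run A R E port (Suc t) v =
     a_recv A (run A R E port t v)
       (map (\<lambda>i. a_send A (run A R E port t (port v i)) (back_port E port (port v i) v))
            [0..<deg E v])"

definition consistent_output :: "('s, 'm) dist_alg \<Rightarrow> nat set \<Rightarrow> nat set \<Rightarrow> nat set set \<Rightarrow> (nat \<Rightarrow> nat \<Rightarrow> nat) \<Rightarrow> nat \<Rightarrow> bool" where
  "consistent_output A V R E port T \<longleftrightarrow> (\<forall>v\<in>V. \<forall>i. a_out A (run A R E port T v) = Some i \<longrightarrow>
     i < deg E v \<and> a_out A (run A R E port T (port v i)) = Some (back_port E port (port v i) v))"

definition output_matching :: "('s, 'm) dist_alg \<Rightarrow> nat set \<Rightarrow> nat set \<Rightarrow> nat set set \<Rightarrow> (nat \<Rightarrow> nat \<Rightarrow> nat) \<Rightarrow> nat \<Rightarrow> nat set set" where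
  "output_matching A V R E port T =
     {{v, port v i} | v i. v \<in> V \<and> a_out A (run A R E port T v) = Some i}"

end

theory Submission
  imports Defs
begin

text \<open>Red nodes propose to their neighbours in order of decreasing edge weight, and every blue node
keeps the heaviest proposal it has received; a red node whose proposal is rejected moves on to its
next port. After K rounds (2K steps) the held proposals form the output matching M. The analysis is
by dual fitting: in every round each edge {r, b} is covered by the weight held at b plus, at r, the
weight of its accepted proposal or the weight held by the blue node that has just rejected r.
Summing over a maximum-weight matching, the accepted and held terms cost at most 2 w(M) per round,
while all rejection terms together cost at most \<Delta> w(M), because r is rejected at most once per
port. Hence K w(M*) \<le> (2K + \<Delta>) w(M), and K = \<lceil>\<Delta>/\<epsilon>\<rceil> suffices.\<close>

lemma matching_weight_le_potentials:
  fixes w :: "nat set \<Rightarrow> real" and f g :: "nat \<Rightarrow> real"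
  assumes M: "is_matching E M" and fin: "finite R" "finite B"
    and f0: "\<And>r. r \<in> R \<Longrightarrow> 0 \<le> f r" and g0: "\<And>b. b \<in> B \<Longrightarrow> 0 \<le> g b"
    and cover: "\<And>e. e \<in> M \<Longrightarrow> \<exists>r\<in>R. \<exists>b\<in>B. e = {r, b} \<and> w e \<le> f r + g b"
  shows "sum w M \<le> sum f R + sum g B"
proof -
  obtain red blue where rb: "\<And>e. e \<in> M \<Longrightarrow>
      red e \<in> R \<and> blue e \<in> B \<and> e = {red e, blue e} \<and> w e \<le> f (red e) + g (blue e)"
    using cover by metis
  have disjoint: "e = e'" if "e \<in> M" "e' \<in> M" "x \<in> e" "x \<in> e'" for e e' x
    using M that unfolding is_matching_def by blast
  have inj_red: "inj_on red M" and inj_blue: "inj_on blue M"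
    by (rule inj_onI; metis disjoint insert_iff rb)+
  have "sum w M \<le> (\<Sum>e\<in>M. f (red e)) + (\<Sum>e\<in>M. g (blue e))"
    using rb by (simp add: sum.distrib[symmetric] sum_mono)
  also have "(\<Sum>e\<in>M. f (red e)) = sum f (red ` M)"
    by (simp add: sum.reindex[OF inj_red])
  also have "\<dots> \<le> sum f R"
    using rb f0 by (intro sum_mono2 fin) auto
  also have "(\<Sum>e\<in>M. g (blue e)) = sum g (blue ` M)"
    by (simp add: sum.reindex[OF inj_blue])
  also have "\<dots> \<le> sum g B"
    using rb g0 by (intro sum_mono2 fin) auto
  finally show ?thesis by simp
qed

lemma bicoloured_graph_nbrsD:
  assumes "bicoloured_graph V R E" "u \<in> nbrs E v"
  shows "u \<in> V" "v \<in> V" "u \<in> R \<longleftrightarrow> v \<notin> R"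
proof -
  have "{u, v} \<in> E" using assms(2) unfolding nbrs_def by auto
  then obtain r b where "{u, v} = {r, b}" "r \<in> R" "b \<in> V - R"
    using assms(1) unfolding bicoloured_graph_def by blast
  then show "u \<in> V" "v \<in> V" "u \<in> R \<longleftrightarrow> v \<notin> R"
    using assms(1) unfolding bicoloured_graph_def by (auto simp: doubleton_eq_iff)
qed

lemma nbrs_sym: "u \<in> nbrs E v \<longleftrightarrow> v \<in> nbrs E u"
  unfolding nbrs_def by (simp add: insert_commute)

lemma bicoloured_graph_sum_nbrs_le:
  fixes g :: "nat \<Rightarrow> real"
  assumes G: "bicoloured_graph V R E" and deg_le: "\<And>v. v \<in> V \<Longrightarrow> deg E v \<le> \<Delta>"
    and g0: "\<And>b. b \<in> V - R \<Longrightarrow> 0 \<le> g b"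
  shows "(\<Sum>r\<in>R. \<Sum>b\<in>nbrs E r. g b) \<le> real \<Delta> * (\<Sum>b\<in>V - R. g b)"
proof -
  have fin: "finite R" "finite (V - R)"
    using G finite_subset unfolding bicoloured_graph_def by auto
  have "(\<Sum>r\<in>R. \<Sum>b\<in>nbrs E r. g b) = (\<Sum>r\<in>R. \<Sum>b\<in>{b. b \<in> V - R \<and> b \<in> nbrs E r}. g b)"
    using bicoloured_graph_nbrsD[OF G] by (intro sum.cong refl) auto
  also have "\<dots> = (\<Sum>b\<in>V - R. \<Sum>r\<in>{r. r \<in> R \<and> b \<in> nbrs E r}. g b)"
    by (rule sum.swap_restrict[OF fin])
  also have "\<dots> = (\<Sum>b\<in>V - R. real (deg E b) * g b)"
  proof (intro sum.cong refl)
    fix b assume "b \<in> V - R"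
    then have "{r. r \<in> R \<and> b \<in> nbrs E r} = nbrs E b"
      using bicoloured_graph_nbrsD[OF G] nbrs_sym by blast
    then show "(\<Sum>r\<in>{r. r \<in> R \<and> b \<in> nbrs E r}. g b) = real (deg E b) * g b"
      by (simp add: deg_def)
  qed
  also have "\<dots> \<le> (\<Sum>b\<in>V - R. real \<Delta> * g b)"
    using deg_le g0 by (intro sum_mono mult_right_mono) auto
  finally show ?thesis by (simp add: sum_distrib_left)
qed

definition encode_state :: "bool \<Rightarrow> bool \<Rightarrow> nat \<Rightarrow> nat" where
  "encode_state red odd_step x = 4 * x + 2 * of_bool odd_step + of_bool red"

definition state_red :: "nat \<Rightarrow> bool" where "state_red s \<longleftrightarrow> odd s"
definition state_odd_step :: "nat \<Rightarrow> bool" where "state_odd_step s \<longleftrightarrow> odd (s div 2)"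
definition state_val :: "nat \<Rightarrow> nat" where "state_val s = s div 4"

lemma encode_state_simps [simp]:
  "state_red (encode_state c p x) = c"
  "state_odd_step (encode_state c p x) = p"
  "state_val (encode_state c p x) = x"
  unfolding encode_state_def state_red_def state_odd_step_def state_val_def by auto

text \<open>One round takes two steps. A red state stores 2 * p + 1 if its proposal along port p is
currently accepted and 2 * p otherwise; a blue state stores 0, or Suc i if it holds the proposal
that arrived at port i. The message 1 is a proposal (red to blue, even steps) or an acceptance
(blue to red, odd steps).\<close>

definition proposal_send :: "nat \<Rightarrow> nat \<Rightarrow> nat" where
  "proposal_send s i = of_bool (if state_red s then \<not> state_odd_step s \<and> state_val s div 2 = i
                                else state_odd_step s \<and> state_val s = Suc i)"

definition red_update :: "nat \<Rightarrow> nat list \<Rightarrow> nat" where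
  "red_update x ms = (let p = x div 2 in
     if p < length ms then (if ms ! p = 1 then 2 * p + 1 else 2 * (p + 1)) else 2 * p)"

definition blue_update :: "nat list \<Rightarrow> nat" where
  "blue_update ms = (if \<exists>i<length ms. ms ! i = 1 then Suc (LEAST i. i < length ms \<and> ms ! i = 1) else 0)"

definition proposal_recv :: "nat \<Rightarrow> nat list \<Rightarrow> nat" where
  "proposal_recv s ms = encode_state (state_red s) (\<not> state_odd_step s)
     (if state_red s \<and> state_odd_step s then red_update (state_val s) ms
      else if \<not> state_red s \<and> \<not> state_odd_step s then blue_update ms
      else state_val s)"

definition proposal_out :: "nat \<Rightarrow> nat option" where
  "proposal_out s = (if state_red s then (if odd (state_val s) then Some (state_val s div 2) else None)
                     else (if state_val s = 0 then None else Some (state_val s - 1)))"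

definition proposal_alg :: "(nat, nat) dist_alg" where
  "proposal_alg = \<lparr>a_init = (\<lambda>c d. encode_state c False 0), a_send = proposal_send,
                   a_recv = proposal_recv, a_out = proposal_out\<rparr>"

lemma proposal_alg_simps [simp]:
  "a_init proposal_alg = (\<lambda>c d. encode_state c False 0)" "a_send proposal_alg = proposal_send"
  "a_recv proposal_alg = proposal_recv" "a_out proposal_alg = proposal_out"
  by (simp_all add: proposal_alg_def)

locale ported_bicoloured_graph =
  fixes V R :: "nat set" and E :: "nat set set" and w :: "nat set \<Rightarrow> real"
    and port :: "nat \<Rightarrow> nat \<Rightarrow> nat"
  assumes bicoloured: "bicoloured_graph V R E" and weight_pos: "\<And>e. e \<in> E \<Longrightarrow> 0 < w e"
    and ports: "valid_ports V E w port"
begin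

abbreviation "bp \<equiv> back_port E port"
abbreviation "dg \<equiv> deg E"
abbreviation "B \<equiv> V - R"

lemma finite_R: "finite R" and finite_B: "finite B" and R_subset_V: "R \<subseteq> V"
  using bicoloured finite_subset unfolding bicoloured_graph_def by auto

lemma port_bij: "v \<in> V \<Longrightarrow> bij_betw (port v) {..<dg v} (nbrs E v)"
  using ports unfolding valid_ports_def by auto

lemma port_weight_antimono: "v \<in> V \<Longrightarrow> i \<le> j \<Longrightarrow> j < dg v \<Longrightarrow> w {v, port v j} \<le> w {v, port v i}"
  using ports unfolding valid_ports_def by (cases "i = j") auto

lemma port_nbrs: "v \<in> V \<Longrightarrow> i < dg v \<Longrightarrow> port v i \<in> nbrs E v"
  using port_bij bij_betwE by blast

lemma back_port_port: "v \<in> V \<Longrightarrow> i < dg v \<Longrightarrow> bp v (port v i) = i"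
  using port_bij[of v] unfolding back_port_def bij_betw_def inj_on_def
  by (auto intro!: the_equality)

lemma back_port_nbrs: "v \<in> V \<Longrightarrow> u \<in> nbrs E v \<Longrightarrow> bp v u < dg v \<and> port v (bp v u) = u"
  using port_bij[of v] back_port_port[of v] unfolding bij_betw_def by (metis imageE lessThan_iff)

lemma port_edge: "v \<in> V \<Longrightarrow> i < dg v \<Longrightarrow> {v, port v i} \<in> E"
  using port_nbrs unfolding nbrs_def by (simp add: insert_commute)

lemma red_port:
  assumes "r \<in> R" "i < dg r"
  shows "port r i \<in> B" "r \<in> nbrs E (port r i)"
proof -
  have "port r i \<in> nbrs E r" using assms R_subset_V port_nbrs by auto
  then show "port r i \<in> B" "r \<in> nbrs E (port r i)"
    using assms(1) bicoloured_graph_nbrsD[OF bicoloured] nbrs_sym by blast+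
qed

lemma blue_port:
  assumes "b \<in> B" "i < dg b"
  shows "port b i \<in> R" "b \<in> nbrs E (port b i)"
proof -
  have "port b i \<in> nbrs E b" using assms port_nbrs by auto
  then show "port b i \<in> R" "b \<in> nbrs E (port b i)"
    using assms(1) bicoloured_graph_nbrsD[OF bicoloured] nbrs_sym by blast+
qed

abbreviation "st t v \<equiv> run proposal_alg R E port t v"

lemma st_0: "st 0 v = encode_state (v \<in> R) False 0"
  by simp

lemma st_Suc:
  "st (Suc t) v = proposal_recv (st t v)
     (map (\<lambda>i. proposal_send (st t (port v i)) (bp (port v i) v)) [0..<dg v])"
  by simp

declare run.simps [simp del]

lemma st_colour_parity: "state_red (st t v) \<longleftrightarrow> v \<in> R" "state_odd_step (st t v) \<longleftrightarrow> odd t"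
  by (induction t) (simp_all add: st_0 st_Suc proposal_recv_def)

definition pointer :: "nat \<Rightarrow> nat \<Rightarrow> nat" where
  "pointer k r = state_val (st (2 * k) r) div 2"

definition accepted :: "nat \<Rightarrow> nat \<Rightarrow> bool" where
  "accepted k r \<longleftrightarrow> odd (state_val (st (2 * k) r))"

definition hold :: "nat \<Rightarrow> nat \<Rightarrow> nat" where
  "hold k b = state_val (st (2 * k) b)"

definition proposes :: "nat \<Rightarrow> nat \<Rightarrow> nat \<Rightarrow> bool" where
  "proposes k r b \<longleftrightarrow> pointer k r < dg r \<and> port r (pointer k r) = b"

definition holds :: "nat \<Rightarrow> nat \<Rightarrow> nat \<Rightarrow> bool" where
  "holds k b r \<longleftrightarrow> hold k b = Suc (bp b r)"

lemma pointer_0: "pointer 0 r = 0" and not_accepted_0: "\<not> accepted 0 r" and hold_0: "hold 0 b = 0"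
  by (simp_all add: pointer_def accepted_def hold_def st_0)

lemma proposes_iff_pointer: "r \<in> V \<Longrightarrow> b \<in> nbrs E r \<Longrightarrow> proposes k r b \<longleftrightarrow> pointer k r = bp r b"
  using back_port_nbrs back_port_port unfolding proposes_def by metis

lemma proposal_received:
  assumes "b \<in> B" "i < dg b"
  shows "proposal_send (st (2 * k) (port b i)) (bp (port b i) b) = of_bool (proposes k (port b i) b)"
proof -
  have "port b i \<in> R" "b \<in> nbrs E (port b i)" using blue_port[OF assms] by auto
  then show ?thesis
    using R_subset_V proposes_iff_pointer
    by (auto simp: proposal_send_def st_colour_parity pointer_def)
qed

lemma red_val_odd_step: "r \<in> R \<Longrightarrow> state_val (st (Suc (2 * k)) r) = state_val (st (2 * k) r)"
  unfolding st_Suc[of "2 * k"] by (simp add: proposal_recv_def st_colour_parity)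

lemma st_double_Suc: "st (2 * Suc k) v = st (Suc (Suc (2 * k))) v"
  by simp

lemma blue_val_even_step: "b \<notin> R \<Longrightarrow> hold (Suc k) b = state_val (st (Suc (2 * k)) b)"
  unfolding hold_def st_double_Suc st_Suc[of "Suc (2 * k)"]
  by (simp add: proposal_recv_def st_colour_parity)

lemma acceptance_received:
  assumes "r \<in> R" "i < dg r"
  shows "proposal_send (st (Suc (2 * k)) (port r i)) (bp (port r i) r) = of_bool (holds (Suc k) (port r i) r)"
  using red_port[OF assms] blue_val_even_step
  by (simp add: proposal_send_def st_colour_parity holds_def)

lemma hold_Suc:
  assumes "b \<in> B"
  shows "hold (Suc k) b = (if \<exists>i<dg b. proposes k (port b i) b
     then Suc (LEAST i. i < dg b \<and> proposes k (port b i) b) else 0)"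
proof -
  define ms where "ms = map (\<lambda>i. proposal_send (st (2 * k) (port b i)) (bp (port b i) b)) [0..<dg b]"
  have ms: "length ms = dg b" "\<And>i. i < dg b \<Longrightarrow> ms ! i = 1 \<longleftrightarrow> proposes k (port b i) b"
    unfolding ms_def using proposal_received[OF assms] by auto
  have "hold (Suc k) b = state_val (st (Suc (2 * k)) b)"
    using assms by (simp add: blue_val_even_step)
  also have "\<dots> = blue_update ms"
    unfolding st_Suc[of "2 * k"] ms_def using assms by (simp add: proposal_recv_def st_colour_parity)
  also have "\<dots> = (if \<exists>i<dg b. proposes k (port b i) b
     then Suc (LEAST i. i < dg b \<and> proposes k (port b i) b) else 0)"
  proof -
    have "(LEAST i. i < length ms \<and> ms ! i = 1) = (LEAST i. i < dg b \<and> proposes k (port b i) b)"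
      using ms by (intro arg_cong[where f = Least] ext) auto
    then show ?thesis
      unfolding blue_update_def using ms by auto
  qed
  finally show ?thesis .
qed

lemma red_val_Suc:
  assumes "r \<in> R"
  shows "state_val (st (2 * Suc k) r) =
    (if pointer k r < dg r then
       (if holds (Suc k) (port r (pointer k r)) r then 2 * pointer k r + 1 else 2 * (pointer k r + 1))
     else 2 * pointer k r)"
proof -
  define ms where "ms = map (\<lambda>i. proposal_send (st (Suc (2 * k)) (port r i)) (bp (port r i) r)) [0..<dg r]"
  have ms: "length ms = dg r" "\<And>i. i < dg r \<Longrightarrow> ms ! i = 1 \<longleftrightarrow> holds (Suc k) (port r i) r"
    unfolding ms_def using acceptance_received[OF assms] by auto
  have "state_val (st (2 * Suc k) r) = red_update (state_val (st (2 * k) r)) ms"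
    using assms unfolding st_double_Suc st_Suc[of "Suc (2 * k)"] ms_def
    by (simp add: proposal_recv_def st_colour_parity red_val_odd_step)
  then show ?thesis
    using ms unfolding red_update_def pointer_def by (simp add: Let_def)
qed

lemma accepted_Suc:
  "r \<in> R \<Longrightarrow> accepted (Suc k) r \<longleftrightarrow> pointer k r < dg r \<and> holds (Suc k) (port r (pointer k r)) r"
  using red_val_Suc[of r k] unfolding accepted_def by auto

lemma pointer_Suc:
  "r \<in> R \<Longrightarrow> pointer (Suc k) r = (if pointer k r < dg r \<and> \<not> accepted (Suc k) r then pointer k r + 1 else pointer k r)"
  using red_val_Suc[of r k] accepted_Suc[of r k] unfolding pointer_def[of "Suc k"] by auto

lemma pointer_le_deg: "r \<in> R \<Longrightarrow> pointer k r \<le> dg r"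
  by (induction k) (auto simp: pointer_0 pointer_Suc)

lemma pointer_mono: "r \<in> R \<Longrightarrow> k \<le> k' \<Longrightarrow> pointer k r \<le> pointer k' r"
  by (rule lift_Suc_mono_le[of "\<lambda>k. pointer k r"]) (auto simp: pointer_Suc)

lemma accepted_holds:
  assumes "r \<in> R" "accepted k r"
  shows "pointer k r < dg r \<and> holds k (port r (pointer k r)) r"
proof (cases k)
  case 0 then show ?thesis using assms not_accepted_0 by simp
next
  case (Suc k')
  then have "pointer k r = pointer k' r" using pointer_Suc[OF assms(1), of k'] assms(2) by auto
  then show ?thesis using accepted_Suc[OF assms(1), of k'] assms(2) Suc by auto
qed

lemma hold_eq_SucD:
  assumes "b \<in> B" "hold k b = Suc i"
  shows "i < dg b \<and> accepted k (port b i) \<and> proposes k (port b i) b"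
proof (cases k)
  case 0 then show ?thesis using assms hold_0 by simp
next
  case (Suc k')
  let ?P = "\<lambda>i. i < dg b \<and> proposes k' (port b i) b"
  have ex: "\<exists>i. ?P i" and i: "i = (LEAST i. ?P i)"
    using hold_Suc[OF assms(1), of k'] assms(2) Suc by (auto split: if_splits)
  have Pi: "?P i" unfolding i using ex by (rule LeastI_ex)
  define r where "r = port b i"
  have r: "r \<in> R" "b \<in> nbrs E r" using blue_port[OF assms(1)] Pi r_def by auto
  have "pointer k' r < dg r" "port r (pointer k' r) = b" using Pi r_def by (auto simp: proposes_def)
  moreover have "bp b r = i" using back_port_port assms(1) Pi r_def by auto
  ultimately have "accepted k r"
    using accepted_Suc[OF r(1), of k'] assms(2) unfolding Suc holds_def by simp
  moreover have "pointer k r = pointer k' r" using pointer_Suc[OF r(1), of k'] Suc calculation by simp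
  ultimately show ?thesis using Pi r_def Suc by (simp add: proposes_def)
qed

definition hold_weight :: "nat \<Rightarrow> nat \<Rightarrow> real" where
  "hold_weight k b = (case hold k b of 0 \<Rightarrow> 0 | Suc i \<Rightarrow> w {b, port b i})"

lemma hold_weight_nonneg: "b \<in> B \<Longrightarrow> 0 \<le> hold_weight k b"
  using hold_eq_SucD port_edge weight_pos
  by (fastforce simp: hold_weight_def less_imp_le split: nat.split)

lemma proposal_weight_le_hold_weight:
  assumes "r \<in> R" "proposes k r b"
  shows "w {r, b} \<le> hold_weight (Suc k) b"
proof -
  have b: "b \<in> B" "r \<in> nbrs E b" using red_port[OF assms(1)] assms(2) by (auto simp: proposes_def)
  let ?P = "\<lambda>i. i < dg b \<and> proposes k (port b i) b"
  have r: "bp b r < dg b" "port b (bp b r) = r" using back_port_nbrs b by auto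
  then have P: "?P (bp b r)" using assms(2) by simp
  then have "(LEAST i. ?P i) \<le> bp b r" by (rule Least_le)
  moreover have "hold (Suc k) b = Suc (LEAST i. ?P i)" using hold_Suc[OF b(1)] P by auto
  ultimately show ?thesis
    using port_weight_antimono[of b "LEAST i. ?P i" "bp b r"] b r
    by (simp add: hold_weight_def insert_commute)
qed

lemma hold_weight_mono:
  assumes "b \<in> B" "k \<le> k'"
  shows "hold_weight k b \<le> hold_weight k' b"
proof (rule lift_Suc_mono_le[of "\<lambda>k. hold_weight k b", OF _ assms(2)])
  fix k
  show "hold_weight k b \<le> hold_weight (Suc k) b"
  proof (cases "hold k b")
    case 0 then show ?thesis using hold_weight_nonneg[OF assms(1)] by (simp add: hold_weight_def)
  next
    case (Suc i)
    then have "proposes k (port b i) b" "port b i \<in> R"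
      using hold_eq_SucD blue_port assms(1) by auto
    then have "w {port b i, b} \<le> hold_weight (Suc k) b"
      by (rule proposal_weight_le_hold_weight[rotated])
    then show ?thesis using Suc by (simp add: hold_weight_def insert_commute)
  qed
qed

text \<open>The pointer of r only passes b after b has rejected r in favour of a proposal at least as
heavy, and b never trades down.\<close>

lemma passed_weight_le_hold_weight:
  assumes "r \<in> R" "b \<in> nbrs E r" "bp r b < pointer k r"
  shows "w {r, b} \<le> hold_weight k b"
  using assms(3)
proof (induction k)
  case 0 then show ?case by (simp add: pointer_0)
next
  case (Suc k)
  have b: "b \<in> B" using assms R_subset_V bicoloured_graph_nbrsD[OF bicoloured] by auto
  show ?case
  proof (cases "bp r b < pointer k r")
    case True
    then show ?thesis using Suc.IH hold_weight_mono[OF b, of k "Suc k"] by simp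
  next
    case False
    then have "proposes k r b"
      using Suc.prems pointer_Suc[OF assms(1), of k] proposes_iff_pointer assms R_subset_V
      by (auto split: if_splits)
    then show ?thesis using proposal_weight_le_hold_weight[OF assms(1)] by simp
  qed
qed

definition accepted_weight :: "nat \<Rightarrow> nat \<Rightarrow> real" where
  "accepted_weight k r = (if accepted k r then w {r, port r (pointer k r)} else 0)"

definition rejected_weight :: "nat \<Rightarrow> nat \<Rightarrow> real" where
  "rejected_weight k r =
     (if pointer k r < dg r \<and> \<not> accepted (Suc k) r then hold_weight (Suc k) (port r (pointer k r)) else 0)"

lemma accepted_weight_eq_hold_weight:
  assumes "r \<in> R"
  shows "accepted_weight k r = (if accepted k r then hold_weight k (port r (pointer k r)) else 0)"
proof -
  have "hold_weight k (port r (pointer k r)) = w {r, port r (pointer k r)}" if "accepted k r"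
  proof -
    define b where "b = port r (pointer k r)"
    have p: "pointer k r < dg r" "hold k b = Suc (bp b r)"
      using accepted_holds[OF assms that] by (auto simp: b_def holds_def)
    then have "port b (bp b r) = r" using red_port[OF assms] back_port_nbrs b_def by auto
    then show ?thesis using p by (simp add: hold_weight_def b_def insert_commute)
  qed
  then show ?thesis by (simp add: accepted_weight_def)
qed

lemma accepted_weight_nonneg: "r \<in> R \<Longrightarrow> 0 \<le> accepted_weight k r"
  using accepted_holds red_port hold_weight_nonneg by (simp add: accepted_weight_eq_hold_weight)

lemma rejected_weight_nonneg: "r \<in> R \<Longrightarrow> 0 \<le> rejected_weight k r"
  using red_port hold_weight_nonneg by (simp add: rejected_weight_def)

lemma edge_weight_le_potentials:
  assumes "r \<in> R" "b \<in> nbrs E r"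
  shows "w {r, b} \<le> accepted_weight (Suc k) r + rejected_weight k r + hold_weight (Suc k) b"
proof -
  have b: "b \<in> B" using assms R_subset_V bicoloured_graph_nbrsD[OF bicoloured] by auto
  define q where "q = bp r b"
  have q: "q < dg r" "w {r, b} = w {r, port r q}"
    using back_port_nbrs assms R_subset_V q_def by auto
  have "w {r, b} \<le> hold_weight (Suc k) b" if "q < pointer (Suc k) r"
    using passed_weight_le_hold_weight assms that q_def by blast
  moreover have "w {r, b} \<le> accepted_weight (Suc k) r" if "pointer (Suc k) r \<le> q" "accepted (Suc k) r"
    using port_weight_antimono[of r] that q assms(1) R_subset_V by (auto simp: accepted_weight_def)
  moreover have "w {r, b} \<le> rejected_weight k r" if "pointer (Suc k) r \<le> q" "\<not> accepted (Suc k) r"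
  proof -
    have p: "pointer k r < dg r" "pointer (Suc k) r = pointer k r + 1"
      using pointer_Suc[OF assms(1), of k] pointer_le_deg[OF assms(1), of k] that q(1)
      by (auto split: if_splits)
    have "w {r, port r q} \<le> w {r, port r (pointer k r)}"
      using port_weight_antimono[of r] that q assms(1) R_subset_V p by auto
    also have "\<dots> \<le> hold_weight (Suc k) (port r (pointer k r))"
      using proposal_weight_le_hold_weight[OF assms(1)] p by (simp add: proposes_def)
    finally show ?thesis using p that q by (simp add: rejected_weight_def)
  qed
  ultimately show ?thesis
    using accepted_weight_nonneg rejected_weight_nonneg hold_weight_nonneg assms(1) b
    by (smt (verit) not_le)
qed

text \<open>Accepted proposals form a matching, so the red potentials are paid by distinct blue ones.\<close>

lemma sum_accepted_weight_le: "(\<Sum>r\<in>R. accepted_weight k r) \<le> (\<Sum>b\<in>B. hold_weight k b)"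
proof -
  define H where "H = {r \<in> R. accepted k r}"
  define partner where "partner r = port r (pointer k r)" for r
  have partner: "partner r \<in> B" "hold k (partner r) = Suc (bp (partner r) r)" "r \<in> nbrs E (partner r)"
    if "r \<in> H" for r
    using that accepted_holds red_port unfolding H_def partner_def holds_def by auto
  have "inj_on partner H"
  proof (rule inj_onI)
    fix r r' assume "r \<in> H" "r' \<in> H" "partner r = partner r'"
    then show "r = r'" using partner back_port_nbrs by (metis DiffD1 Suc_inject)
  qed
  have "(\<Sum>r\<in>R. accepted_weight k r) = (\<Sum>r\<in>H. hold_weight k (partner r))"
    by (rule sum.mono_neutral_cong_right)
      (auto simp: H_def partner_def finite_R accepted_weight_eq_hold_weight)
  also have "\<dots> = (\<Sum>b\<in>partner ` H. hold_weight k b)"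
    by (simp add: sum.reindex[OF \<open>inj_on partner H\<close>])
  also have "\<dots> \<le> (\<Sum>b\<in>B. hold_weight k b)"
    using partner hold_weight_nonneg by (intro sum_mono2 finite_B) auto
  finally show ?thesis .
qed

text \<open>A red proposal is rejected at most once per port, since the pointer then advances.\<close>

lemma sum_rejected_weight_le:
  assumes "r \<in> R"
  shows "(\<Sum>k<K. rejected_weight k r) \<le> (\<Sum>b\<in>nbrs E r. hold_weight K b)"
proof -
  define J where "J = {k. k < K \<and> pointer k r < dg r \<and> \<not> accepted (Suc k) r}"
  have advance: "pointer k r < pointer k' r" if "k \<in> J" "k < k'" for k k'
    using that pointer_Suc[OF assms, of k] pointer_mono[OF assms, of "Suc k" k'] by (simp add: J_def)
  have inj: "inj_on (\<lambda>k. pointer k r) J"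
    by (rule inj_onI) (metis advance less_irrefl linorder_neqE_nat)
  have "(\<Sum>k<K. rejected_weight k r) = (\<Sum>k\<in>J. rejected_weight k r)"
    by (rule sum.mono_neutral_right) (auto simp: J_def rejected_weight_def)
  also have "\<dots> \<le> (\<Sum>k\<in>J. hold_weight K (port r (pointer k r)))"
    using hold_weight_mono red_port[OF assms] by (intro sum_mono) (auto simp: J_def rejected_weight_def)
  also have "\<dots> = (\<Sum>i\<in>(\<lambda>k. pointer k r) ` J. hold_weight K (port r i))"
    by (simp add: sum.reindex[OF inj])
  also have "\<dots> \<le> (\<Sum>i<dg r. hold_weight K (port r i))"
    using hold_weight_nonneg red_port[OF assms] by (intro sum_mono2) (auto simp: J_def)
  also have "\<dots> = (\<Sum>b\<in>nbrs E r. hold_weight K b)"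
    using port_bij assms R_subset_V by (intro sum.reindex_bij_betw) auto
  finally show ?thesis .
qed

lemma matching_weight_bound:
  assumes M: "is_matching E M" and deg_le: "\<And>v. v \<in> V \<Longrightarrow> dg v \<le> \<Delta>"
  shows "real K * sum w M \<le> (2 * real K + real \<Delta>) * (\<Sum>b\<in>B. hold_weight K b)"
proof -
  let ?S = "\<lambda>k. \<Sum>b\<in>B. hold_weight k b"
  have round: "sum w M \<le> 2 * ?S K + (\<Sum>r\<in>R. rejected_weight k r)" if "k < K" for k
  proof -
    have "sum w M \<le> (\<Sum>r\<in>R. accepted_weight (Suc k) r + rejected_weight k r) + ?S (Suc k)"
    proof (rule matching_weight_le_potentials[OF M finite_R finite_B])
      fix e assume "e \<in> M"
      then obtain r b where "e = {r, b}" "r \<in> R" "b \<in> B"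
        using M bicoloured unfolding is_matching_def bicoloured_graph_def by blast
      moreover have "b \<in> nbrs E r" using \<open>e \<in> M\<close> M calculation
        by (auto simp: is_matching_def nbrs_def insert_commute)
      ultimately show "\<exists>r\<in>R. \<exists>b\<in>B. e = {r, b} \<and>
          w e \<le> accepted_weight (Suc k) r + rejected_weight k r + hold_weight (Suc k) b"
        using edge_weight_le_potentials by fastforce
    qed (use accepted_weight_nonneg rejected_weight_nonneg hold_weight_nonneg in auto)
    moreover have "?S (Suc k) \<le> ?S K"
      using hold_weight_mono that by (intro sum_mono) auto
    ultimately show ?thesis
      using sum_accepted_weight_le[of "Suc k"] by (simp add: sum.distrib)
  qed
  have "real K * sum w M = (\<Sum>k<K. sum w M)" by simp
  also have "\<dots> \<le> (\<Sum>k<K. 2 * ?S K + (\<Sum>r\<in>R. rejected_weight k r))"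
    using round by (intro sum_mono) auto
  also have "\<dots> = 2 * real K * ?S K + (\<Sum>r\<in>R. \<Sum>k<K. rejected_weight k r)"
    by (simp add: sum.distrib sum.swap[of _ "{..<K}" R])
  also have "(\<Sum>r\<in>R. \<Sum>k<K. rejected_weight k r) \<le> (\<Sum>r\<in>R. \<Sum>b\<in>nbrs E r. hold_weight K b)"
    by (intro sum_mono sum_rejected_weight_le)
  also have "\<dots> \<le> real \<Delta> * ?S K"
    using bicoloured_graph_sum_nbrs_le[OF bicoloured deg_le] hold_weight_nonneg by blast
  finally show ?thesis by (simp add: algebra_simps)
qed

definition held_edges :: "nat \<Rightarrow> nat set set" where
  "held_edges k = (\<lambda>b. {b, port b (hold k b - 1)}) ` {b \<in> B. hold k b \<noteq> 0}"

lemma out_red: "r \<in> R \<Longrightarrow> proposal_out (st (2 * k) r) = (if accepted k r then Some (pointer k r) else None)"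
  by (simp add: proposal_out_def st_colour_parity accepted_def pointer_def)

lemma out_blue: "b \<notin> R \<Longrightarrow> proposal_out (st (2 * k) b) = (if hold k b = 0 then None else Some (hold k b - 1))"
  by (simp add: proposal_out_def st_colour_parity hold_def)

lemma held_edgeD:
  assumes "b \<in> B" "hold k b \<noteq> 0"
  defines "r \<equiv> port b (hold k b - 1)"
  shows "hold k b - 1 < dg b" "r \<in> R" "accepted k r" "pointer k r < dg r" "port r (pointer k r) = b"
  using hold_eq_SucD[OF assms(1), of k "hold k b - 1"] blue_port[OF assms(1)] assms
  by (auto simp: proposes_def)

lemma output_matching_eq_held_edges: "output_matching proposal_alg V R E port (2 * k) = held_edges k"
proof -
  have "{v, port v i} \<in> held_edges k" if "v \<in> V" "proposal_out (st (2 * k) v) = Some i" for v i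
  proof (cases "v \<in> R")
    case True
    define b where "b = port v i"
    have "accepted k v" "i = pointer k v" using out_red True that by (auto split: if_splits)
    then have "i < dg v" "hold k b = Suc (bp b v)"
      using accepted_holds True by (auto simp: b_def holds_def)
    moreover have "b \<in> B" "port b (bp b v) = v"
      using red_port[OF True] back_port_nbrs \<open>i < dg v\<close> by (auto simp: b_def)
    ultimately show ?thesis by (auto simp: held_edges_def image_iff b_def insert_commute intro!: bexI[of _ b])
  next
    case False
    then show ?thesis using out_blue that by (auto simp: held_edges_def image_iff split: if_splits)
  qed
  moreover have "e \<in> output_matching proposal_alg V R E port (2 * k)" if "e \<in> held_edges k" for e
    using that out_blue by (force simp: held_edges_def output_matching_def)
  ultimately show ?thesis by (auto simp: output_matching_def)
qed

lemma held_edges_matching: "is_matching E (held_edges k)"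
  unfolding is_matching_def
proof (intro conjI ballI impI)
  show "held_edges k \<subseteq> E" using held_edgeD port_edge by (auto simp: held_edges_def)
next
  fix e e' assume "e \<in> held_edges k" "e' \<in> held_edges k" "e \<noteq> e'"
  then obtain b b' where b: "b \<in> B" "hold k b \<noteq> 0" "e = {b, port b (hold k b - 1)}"
    and b': "b' \<in> B" "hold k b' \<noteq> 0" "e' = {b', port b' (hold k b' - 1)}" and "b \<noteq> b'"
    by (auto simp: held_edges_def)
  then have "port b (hold k b - 1) \<noteq> port b' (hold k b' - 1)" using held_edgeD(5) by metis
  then show "e \<inter> e' = {}" using b b' \<open>b \<noteq> b'\<close> held_edgeD(2) by auto
qed

lemma sum_held_edges: "sum w (held_edges k) = (\<Sum>b\<in>B. hold_weight k b)"
proof -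
  let ?edge = "\<lambda>b. {b, port b (hold k b - 1)}"
  have "inj_on ?edge {b \<in> B. hold k b \<noteq> 0}"
    using held_edgeD(2) by (intro inj_onI) (auto simp: doubleton_eq_iff)
  then have "sum w (held_edges k) = (\<Sum>b | b \<in> B \<and> hold k b \<noteq> 0. w (?edge b))"
    by (simp add: held_edges_def sum.reindex)
  also have "\<dots> = (\<Sum>b\<in>B. hold_weight k b)"
    by (rule sum.mono_neutral_cong_left) (auto simp: finite_B hold_weight_def split: nat.splits)
  finally show ?thesis .
qed

lemma held_edges_approximation:
  assumes "is_matching E M" "\<And>v. v \<in> V \<Longrightarrow> dg v \<le> \<Delta>" "real \<Delta> \<le> \<epsilon> * real K" "0 < K"
  shows "sum w M \<le> (2 + \<epsilon>) * sum w (held_edges K)"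
proof -
  let ?S = "\<Sum>b\<in>B. hold_weight K b"
  have "real K * sum w M \<le> (2 * real K + real \<Delta>) * ?S"
    using matching_weight_bound assms(1,2) .
  also have "\<dots> \<le> real K * ((2 + \<epsilon>) * ?S)"
    using mult_right_mono[OF assms(3) sum_nonneg[of B "hold_weight K"]] hold_weight_nonneg
    by (simp add: algebra_simps)
  finally show ?thesis using assms(4) by (simp add: sum_held_edges)
qed

lemma output_consistent: "consistent_output proposal_alg V R E port (2 * k)"
  unfolding consistent_output_def proposal_alg_simps
proof (intro ballI allI impI)
  fix v i assume v: "v \<in> V" and out: "proposal_out (st (2 * k) v) = Some i"
  show "i < dg v \<and> proposal_out (st (2 * k) (port v i)) = Some (bp (port v i) v)"
  proof (cases "v \<in> R")
    case True
    then have "accepted k v" "i = pointer k v" using out_red out by (auto split: if_splits)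
    then show ?thesis using accepted_holds True red_port out_blue by (simp add: holds_def)
  next
    case False
    then have "hold k v = Suc i" using out_blue out by (auto split: if_splits)
    then have h: "i < dg v" "accepted k (port v i)" "proposes k (port v i) v"
      using hold_eq_SucD v False by auto
    moreover have "port v i \<in> R" "v \<in> nbrs E (port v i)" using blue_port v False h(1) by auto
    ultimately show ?thesis using out_red proposes_iff_pointer R_subset_V by auto
  qed
qed

end

theorem theorem2:
  fixes \<epsilon> :: real and \<Delta> :: nat
  assumes "\<epsilon> > 0" and "\<Delta> \<ge> 1"
  shows "\<exists>(A :: (nat, nat) dist_alg) (T :: nat). real T \<le> 4 + 2 * real \<Delta> / \<epsilon> \<and>
    (\<forall>V R E (w :: nat set \<Rightarrow> real) port.
       bicoloured_graph V R E \<and> (\<forall>v\<in>V. deg E v \<le> \<Delta>) \<and> (\<forall>e\<in>E. w e > 0) \<and>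
       valid_ports V E w port \<longrightarrow>
         consistent_output A V R E port T \<and>
         is_matching E (output_matching A V R E port T) \<and>
         (\<forall>Mstar. max_weight_matching E w Mstar \<longrightarrow>
            sum w Mstar \<le> (2 + \<epsilon>) * sum w (output_matching A V R E port T)))"
proof -
  define K where "K = nat \<lceil>real \<Delta> / \<epsilon>\<rceil>"
  have "0 < real \<Delta> / \<epsilon>" using assms by simp
  then have K_ge: "real \<Delta> / \<epsilon> \<le> real K" and K_lt: "real K < real \<Delta> / \<epsilon> + 1"
    unfolding K_def by linarith+
  have "0 < K" using K_ge \<open>0 < real \<Delta> / \<epsilon>\<close> by simp
  have "real \<Delta> \<le> \<epsilon> * real K" using K_ge assms(1) by (simp add: divide_le_eq mult.commute)
  show ?thesis
  proof (intro exI[of _ proposal_alg] exI[of _ "2 * K"] conjI allI impI)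
    fix V R E w port
    assume G: "bicoloured_graph V R E \<and> (\<forall>v\<in>V. deg E v \<le> \<Delta>) \<and> (\<forall>e\<in>E. w e > 0) \<and>
      valid_ports V E w port"
    then interpret ported_bicoloured_graph V R E w port
      by unfold_locales auto
    show "consistent_output proposal_alg V R E port (2 * K)"
      by (rule output_consistent)
    show "is_matching E (output_matching proposal_alg V R E port (2 * K))"
      by (simp add: output_matching_eq_held_edges held_edges_matching)
    fix Mstar assume "max_weight_matching E w Mstar"
    then have "sum w Mstar \<le> (2 + \<epsilon>) * sum w (held_edges K)"
      using G \<open>0 < K\<close> \<open>real \<Delta> \<le> \<epsilon> * real K\<close> unfolding max_weight_matching_def
      by (intro held_edges_approximation) auto
    then show "sum w Mstar \<le> (2 + \<epsilon>) * sum w (output_matching proposal_alg V R E port (2 * K))"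
      by (simp add: output_matching_eq_held_edges)
  qed (use K_lt in simp)
qed

end
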